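(* Let $f$ be a PSR with core test sets $\{\mathcal{U}_h\}_{h\in[H]}$ such that every $o\in\mathcal{O}$ (as a length-one test) belongs to $\mathcal{U}_H$, with parameters $\{M_{o,a,h;f},q_{0;f}\}$ and $m_{o,H;f}=e_{o}$ (the standard basis vector of $\mathbb{R}^{|\mathcal{U}_H|}$ indexing $o$). Define new parameters $\{M_{o,a,h;f'},q_{0;f}\}$ by letting, for all $o\in\mathcal{O},a\in\mathcal{A},h\in[H-1],u\in\mathcal{U}_{h+1}$, the row $m_{(o,a,u),h;f'}$ be the orthogonal projection of $m_{(o,a,u),h;f}$ onto the column space of $K_{h-1;f}$, and set $\mathbb{P}^\pi_{f'}(\tau_H):=e_{o_H}^\top M_{o_{H-1},a_{H-1},H-1;f'}\cdots M_{o_1,a_1,1;f'}q_{0;f}\,\pi(\tau_H)$. Then $\mathbb{P}^\pi_f(\tau_H)=\mathbb{P}^\pi_{f'}(\tau_H)$ for every trajectory $\tau_H$ and every policy $\pi$.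
   Context: Process (model $f$) with finite $\mathcal{O},\mathcal{A}$, horizon $H$; histories $\tau_h=(o_1,a_1,\dots,o_h,a_h)$; a policy $\pi$ picks $a_h\sim\pi_h(\cdot\mid\tau_{h-1},o_h)$, $\pi(\tau_h)=\prod_{l\le h}\pi_l(a_l\mid\tau_{l-1},o_l)$, $\mathbb{P}^\pi_f(\tau_h)$ is the probability of $\tau_h$ under $\pi$ in $f$. A test starting at step $h$ is $t=(o_h,\dots,o_{h+W-1},a_h,\dots,a_{h+W-2})$; $\mathbb{P}_f(t\mid\tau_{h-1})$ is the probability of observing $o_{h:h+W-1}$ when executing $a_{h:h+W-2}$ after $\tau_{h-1}$ ($0$ if unreachable). A set $\mathcal{U}_h$ of tests starting at $h$ is a core test set if for every test $t$ starting at $h$ there is a history-independent $m_{t,h;f}$ with $\mathbb{P}_f(t\mid\tau_{h-1})=\langle m_{t,h;f},q_{\tau_{h-1};f}\rangle$, $q_{\tau_{h-1};f}=[\mathbb{P}_f(u\mid\tau_{h-1})]_{u\in\mathcal{U}_h}$; $q_{0;f}=[\mathbb{P}_f(u)]_{u\in\mathcal{U}_1}$; $M_{o,a,h;f}$ has rows $m_{(o,a,u),h;f}^\top$, $u\in\mathcal{U}_{h+1}$. Let $d_{\mathrm{PSR},h}$ be the rank of the matrix with entries $\mathbb{P}_f(t\mid\tau_h)$ (rows: tests starting at $h+1$; columns: histories $\tau_h$). Core matrix: for $h\ge1$, $K_{h;f}$ has columns $q_{\tau_h^1;f},\dots,q_{\tau_h^{d_{\mathrm{PSR},h}};f}$ for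 histories whose predictive states span all $q_{\tau_h;f}$ (chosen to minimize $\|K_{h;f}^\dagger\|_{1\to1}$); $K_{0;f}=q_{0;f}$. *)

theory Defs
  imports "HOL-Analysis.Analysis"
begin

text \<open>The process (model f) is given by its observation
  kernel: obs tau ob = probability of observing ob at step (length tau + 1) after tau.
  A test is a pair (observations o_h..o_{h+W-1}, actions a_h..a_{h+W-2}).\<close>

type_synonym ('ob,'a) hist = "('ob \<times> 'a) list"
type_synonym ('ob,'a) test = "'ob list \<times> 'a list"

definition valid_process :: "nat \<Rightarrow> (('ob::finite,'a::finite) hist \<Rightarrow> 'ob \<Rightarrow> real) \<Rightarrow> bool" where
  "valid_process H obs \<longleftrightarrow>
     (\<forall>\<tau> ob. length \<tau> < H \<longrightarrow> obs \<tau> ob \<ge> 0) \<and>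
     (\<forall>\<tau>. length \<tau> < H \<longrightarrow> (\<Sum>ob\<in>UNIV. obs \<tau> ob) = 1)"

definition valid_policy :: "nat \<Rightarrow> (('ob::finite,'a::finite) hist \<Rightarrow> 'ob \<Rightarrow> 'a \<Rightarrow> real) \<Rightarrow> bool" where
  "valid_policy H \<pi> \<longleftrightarrow>
     (\<forall>\<tau> ob a. length \<tau> < H \<longrightarrow> \<pi> \<tau> ob a \<ge> 0) \<and>
     (\<forall>\<tau> ob. length \<tau> < H \<longrightarrow> (\<Sum>a\<in>UNIV. \<pi> \<tau> ob a) = 1)"

definition hist_obs_prob :: "(('ob,'a) hist \<Rightarrow> 'ob \<Rightarrow> real) \<Rightarrow> ('ob,'a) hist \<Rightarrow> real" where
  "hist_obs_prob obs \<tau> = (\<Prod>i<length \<tau>. obs (take i \<tau>) (fst (\<tau> ! i)))"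

definition reachable :: "(('ob,'a) hist \<Rightarrow> 'ob \<Rightarrow> real) \<Rightarrow> ('ob,'a) hist \<Rightarrow> bool" where
  "reachable obs \<tau> \<longleftrightarrow> hist_obs_prob obs \<tau> > 0"

text \<open>Test t starting at step h (1-based) within horizon H.\<close>
definition is_test :: "nat \<Rightarrow> nat \<Rightarrow> ('ob,'a) test \<Rightarrow> bool" where
  "is_test H h t \<longleftrightarrow> 1 \<le> h \<and> length (fst t) \<ge> 1 \<and> length (snd t) + 1 = length (fst t)
      \<and> h + length (fst t) - 1 \<le> H"

definition test_prob :: "(('ob,'a) hist \<Rightarrow> 'ob \<Rightarrow> real) \<Rightarrow> ('ob,'a) hist \<Rightarrow> ('ob,'a) test \<Rightarrow> real" where
  "test_prob obs \<tau> t =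
     (if reachable obs \<tau> then
        (\<Prod>i<length (fst t). obs (\<tau> @ zip (take i (fst t)) (take i (snd t))) (fst t ! i))
      else 0)"

definition traj_prob :: "(('ob,'a) hist \<Rightarrow> 'ob \<Rightarrow> real) \<Rightarrow> (('ob,'a) hist \<Rightarrow> 'ob \<Rightarrow> 'a \<Rightarrow> real)
    \<Rightarrow> ('ob,'a) hist \<Rightarrow> real" where
  "traj_prob obs \<pi> \<tau> = (\<Prod>i<length \<tau>. obs (take i \<tau>) (fst (\<tau> ! i)) * \<pi> (take i \<tau>) (fst (\<tau> ! i)) (snd (\<tau> ! i)))"

definition policy_prob :: "(('ob,'a) hist \<Rightarrow> 'ob \<Rightarrow> 'a \<Rightarrow> real) \<Rightarrow> ('ob,'a) hist \<Rightarrow> real" where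
  "policy_prob \<pi> \<tau> = (\<Prod>i<length \<tau>. \<pi> (take i \<tau>) (fst (\<tau> ! i)) (snd (\<tau> ! i)))"

text \<open>Predictive state q_{tau_h} in R^{U_{h+1}} (vectors in R^U are functions that vanish off U).\<close>
definition pred_state :: "(nat \<Rightarrow> ('ob,'a) test set) \<Rightarrow> (('ob,'a) hist \<Rightarrow> 'ob \<Rightarrow> real)
    \<Rightarrow> ('ob,'a) hist \<Rightarrow> ('ob,'a) test \<Rightarrow> real" where
  "pred_state U obs \<tau> = (\<lambda>u. if u \<in> U (length \<tau> + 1) then test_prob obs \<tau> u else 0)"

definition q0 :: "(nat \<Rightarrow> ('ob,'a) test set) \<Rightarrow> (('ob,'a) hist \<Rightarrow> 'ob \<Rightarrow> real) \<Rightarrow> ('ob,'a) test \<Rightarrow> real" where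
  "q0 U obs = pred_state U obs []"

text \<open>Column space of the core matrix K_{h;f}: for h >= 1 the span of the predictive states
  q_{tau_h} over all histories tau_h (the columns of K_{h;f} are predictive states spanning all
  q_{tau_h}); for h = 0, K_{0;f} = q_{0;f}.\<close>
definition core_colspace :: "(nat \<Rightarrow> ('ob::finite,'a::finite) test set) \<Rightarrow> (('ob,'a) hist \<Rightarrow> 'ob \<Rightarrow> real)
    \<Rightarrow> nat \<Rightarrow> (('ob,'a) test \<Rightarrow> real) set" where
  "core_colspace U obs h =
     (if h = 0 then {(\<lambda>u. c * q0 U obs u) | c. True}
      else {(\<lambda>u. \<Sum>\<tau>\<in>{\<tau>::('ob,'a) hist. length \<tau> = h}. c \<tau> * pred_state U obs \<tau> u) | c. True})"

definition inner_on :: "('t set) \<Rightarrow> ('t \<Rightarrow> real) \<Rightarrow> ('t \<Rightarrow> real) \<Rightarrow> real" where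
  "inner_on U x y = (\<Sum>w\<in>U. x w * y w)"

definition orth_proj :: "('t set) \<Rightarrow> ('t \<Rightarrow> real) set \<Rightarrow> ('t \<Rightarrow> real) \<Rightarrow> ('t \<Rightarrow> real)" where
  "orth_proj U S x = (THE p. p \<in> S \<and> (\<forall>y\<in>S. inner_on U (\<lambda>w. x w - p w) y = 0))"

definition ext_test :: "'ob \<Rightarrow> 'a \<Rightarrow> ('ob,'a) test \<Rightarrow> ('ob,'a) test" where
  "ext_test ob a u = (ob # fst u, a # snd u)"

text \<open>Applying M_{ob,a,h} (rows m_{(ob,a,u),h}, u in U_{h+1}) to a vector in R^{U_h}.\<close>
definition apply_M :: "(nat \<Rightarrow> ('ob,'a) test set) \<Rightarrow> (('ob,'a) test \<Rightarrow> nat \<Rightarrow> ('ob,'a) test \<Rightarrow> real)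
    \<Rightarrow> 'ob \<Rightarrow> 'a \<Rightarrow> nat \<Rightarrow> (('ob,'a) test \<Rightarrow> real) \<Rightarrow> ('ob,'a) test \<Rightarrow> real" where
  "apply_M U m ob a h v = (\<lambda>u. if u \<in> U (h+1) then (\<Sum>w\<in>U h. m (ext_test ob a u) h w * v w) else 0)"

fun prop_state :: "(nat \<Rightarrow> ('ob,'a) test set) \<Rightarrow> (('ob,'a) test \<Rightarrow> nat \<Rightarrow> ('ob,'a) test \<Rightarrow> real)
    \<Rightarrow> (('ob,'a) test \<Rightarrow> real) \<Rightarrow> ('ob,'a) hist \<Rightarrow> nat \<Rightarrow> ('ob,'a) test \<Rightarrow> real" where
  "prop_state U m q \<tau> 0 = q"
| "prop_state U m q \<tau> (Suc l) =
     apply_M U m (fst (\<tau> ! l)) (snd (\<tau> ! l)) (Suc l) (prop_state U m q \<tau> l)"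

definition param_traj_prob :: "nat \<Rightarrow> (nat \<Rightarrow> ('ob,'a) test set) \<Rightarrow> (('ob,'a) test \<Rightarrow> nat \<Rightarrow> ('ob,'a) test \<Rightarrow> real)
    \<Rightarrow> (('ob,'a) test \<Rightarrow> real) \<Rightarrow> (('ob,'a) hist \<Rightarrow> 'ob \<Rightarrow> 'a \<Rightarrow> real) \<Rightarrow> ('ob,'a) hist \<Rightarrow> real" where
  "param_traj_prob H U m q \<pi> \<tau> =
     prop_state U m q \<tau> (H - 1) ([fst (\<tau> ! (H - 1))], []) * policy_prob \<pi> \<tau>"

definition is_PSR :: "nat \<Rightarrow> (('ob::finite,'a::finite) hist \<Rightarrow> 'ob \<Rightarrow> real) \<Rightarrow> (nat \<Rightarrow> ('ob,'a) test set)
    \<Rightarrow> (('ob,'a) test \<Rightarrow> nat \<Rightarrow> ('ob,'a) test \<Rightarrow> real) \<Rightarrow> bool" where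
  "is_PSR H obs U m \<longleftrightarrow> valid_process H obs \<and>
     (\<forall>h\<in>{1..H}. finite (U h) \<and> (\<forall>u\<in>U h. is_test H h u) \<and>
        (\<forall>t. is_test H h t \<longrightarrow>
           (\<forall>\<tau>::('ob,'a) hist. length \<tau> = h - 1 \<longrightarrow>
              test_prob obs \<tau> t = (\<Sum>u\<in>U h. m t h u * test_prob obs \<tau> u))))"

end

theory Submission
  imports Defs
begin

(* Write b_tau = P(tau) q_tau for the predictive state weighted by the probability of the
   history (joint_pred_state).  The PSR identity says exactly that M_{o,a,h} maps b_tau to
   b_{tau (o,a)}, and b_tau lies in the column space of the core matrix K_{|tau|}.  Replacing
   a row of M_{o,a,h} by its orthogonal projection onto that column space does not change its
   inner product with vectors of the column space, so the projected parameters still propagate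
   q_0 along b_{tau_1}, ..., b_{tau_{H-1}}; the o_H coordinate of b_{tau_{H-1}} is the
   probability of the observations of tau_H. *)

definition family_span :: "'i set \<Rightarrow> ('i \<Rightarrow> 't \<Rightarrow> real) \<Rightarrow> ('t \<Rightarrow> real) set" where
  "family_span I g = {(\<lambda>w. \<Sum>i\<in>I. c i * g i w) | c. True}"

lemma family_spanI: "p = (\<lambda>w. \<Sum>i\<in>I. c i * g i w) \<Longrightarrow> p \<in> family_span I g"
  unfolding family_span_def by blast

lemma zero_in_family_span: "(\<lambda>_. 0) \<in> family_span I g"
  unfolding family_span_def by (auto intro!: exI[of _ "\<lambda>_. 0"])

lemma family_span_member: "finite I \<Longrightarrow> i \<in> I \<Longrightarrow> g i \<in> family_span I g"
proof -
  assume "finite I" "i \<in> I"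
  then have "g i = (\<lambda>w. \<Sum>j\<in>I. (if j = i then 1 else 0) * g j w)"
    by (simp add: if_distrib[of "\<lambda>c. c * _"] sum.delta' cong: if_cong)
  then show ?thesis by (rule family_spanI)
qed

lemma family_span_add:
  "p \<in> family_span I g \<Longrightarrow> q \<in> family_span I g \<Longrightarrow> (\<lambda>w. p w + q w) \<in> family_span I g"
proof -
  assume "p \<in> family_span I g" "q \<in> family_span I g"
  then obtain c d where "p = (\<lambda>w. \<Sum>i\<in>I. c i * g i w)" "q = (\<lambda>w. \<Sum>i\<in>I. d i * g i w)"
    by (auto simp: family_span_def)
  then have "(\<lambda>w. p w + q w) = (\<lambda>w. \<Sum>i\<in>I. (c i + d i) * g i w)"
    by (simp add: distrib_right sum.distrib)
  then show ?thesis by (rule family_spanI)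
qed

lemma family_span_scale:
  "p \<in> family_span I g \<Longrightarrow> (\<lambda>w. a * p w) \<in> family_span I g"
proof -
  assume "p \<in> family_span I g"
  then obtain c where "p = (\<lambda>w. \<Sum>i\<in>I. c i * g i w)" by (auto simp: family_span_def)
  then have "(\<lambda>w. a * p w) = (\<lambda>w. \<Sum>i\<in>I. (a * c i) * g i w)"
    by (simp add: sum_distrib_left mult.assoc)
  then show ?thesis by (rule family_spanI)
qed

lemma family_span_diff:
  "p \<in> family_span I g \<Longrightarrow> q \<in> family_span I g \<Longrightarrow> (\<lambda>w. p w - q w) \<in> family_span I g"
  using family_span_add[of p I g "\<lambda>w. (-1) * q w"] family_span_scale[of q I g "-1"] by simp

lemma family_span_mono:
  assumes "finite J" "I \<subseteq> J"
  shows "family_span I g \<subseteq> family_span J g"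
proof
  fix p assume "p \<in> family_span I g"
  then obtain c where "p = (\<lambda>w. \<Sum>i\<in>I. c i * g i w)" by (auto simp: family_span_def)
  moreover have "(\<Sum>i\<in>I. c i * g i w) = (\<Sum>i\<in>J. (if i \<in> I then c i else 0) * g i w)" for w
    using assms by (intro sum.mono_neutral_cong_left) auto
  ultimately show "p \<in> family_span J g" by (auto simp: family_span_def)
qed

lemma family_span_vanishes:
  assumes "\<forall>i\<in>I. g i w = 0" "p \<in> family_span I g"
  shows "p w = 0"
  using assms by (auto simp: family_span_def)

lemma inner_on_diff_left:
  "inner_on U (\<lambda>w. x w - y w) z = inner_on U x z - inner_on U y z"
  unfolding inner_on_def by (simp add: left_diff_distrib sum_subtractf)

lemma inner_on_scale_left: "inner_on U (\<lambda>w. a * x w) y = a * inner_on U x y"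
  unfolding inner_on_def by (simp add: sum_distrib_left mult.assoc)

lemma inner_on_add_right:
  "inner_on U x (\<lambda>w. y w + z w) = inner_on U x y + inner_on U x z"
  unfolding inner_on_def by (simp add: distrib_left sum.distrib)

lemma inner_on_self_eq_0D:
  assumes "finite U" "inner_on U r r = 0" "w \<in> U"
  shows "r w = 0"
  using assms unfolding inner_on_def by (simp add: sum_nonneg_eq_0_iff)

lemma inner_on_sum_right:
  "inner_on U x (\<lambda>w. \<Sum>i\<in>I. c i * g i w) = (\<Sum>i\<in>I. c i * inner_on U x (g i))"
  unfolding inner_on_def by (simp add: sum_distrib_left sum.swap[of _ U] mult_ac)

lemma inner_on_family_span_right:
  assumes "\<forall>i\<in>I. inner_on U x (g i) = 0" "p \<in> family_span I g"
  shows "inner_on U x p = 0"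
  using assms by (auto simp: family_span_def inner_on_sum_right)

lemma orthogonal_residual_exists:
  assumes "finite U" "finite I"
  shows "\<exists>p\<in>family_span I g. \<forall>i\<in>I. inner_on U (\<lambda>w. x w - p w) (g i) = 0"
  using assms(2)
proof (induction I arbitrary: x rule: finite_induct)
  case empty
  show ?case using zero_in_family_span by blast
next
  case (insert k I)
  obtain p where p: "p \<in> family_span I g"
    and e_orth: "\<forall>i\<in>I. inner_on U (\<lambda>w. x w - p w) (g i) = 0"
    using insert.IH by blast
  obtain pk where pk: "pk \<in> family_span I g"
    and r_orth: "\<forall>i\<in>I. inner_on U (\<lambda>w. g k w - pk w) (g i) = 0"
    using insert.IH by blast
  define e where "e = (\<lambda>w. x w - p w)"
  define r where "r = (\<lambda>w. g k w - pk w)"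
  define \<alpha> where "\<alpha> = inner_on U e r / inner_on U r r"
  define e' where "e' = (\<lambda>w. e w - \<alpha> * r w)"
  have span_mono: "family_span I g \<subseteq> family_span (insert k I) g"
    using insert.hyps by (intro family_span_mono) auto
  have r_span: "r \<in> family_span (insert k I) g"
    unfolding r_def using pk span_mono insert.hyps
    by (intro family_span_diff family_span_member) auto
  have e'_I: "\<forall>i\<in>I. inner_on U e' (g i) = 0"
    using e_orth r_orth by (simp add: e'_def e_def r_def inner_on_diff_left inner_on_scale_left)
  \<comment> \<open>Gram-Schmidt step; if r vanishes on U, the residual e is already orthogonal to it\<close>
  have e'_r: "inner_on U e' r = 0"
  proof (cases "inner_on U r r = 0")
    case True
    then have "inner_on U e r = 0"
      using inner_on_self_eq_0D[OF assms(1) True] by (simp add: inner_on_def)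
    then show ?thesis using True by (simp add: e'_def inner_on_diff_left inner_on_scale_left)
  next
    case False
    have "inner_on U e' r = inner_on U e r - \<alpha> * inner_on U r r"
      by (simp add: e'_def inner_on_diff_left inner_on_scale_left)
    then show ?thesis using False by (simp add: \<alpha>_def)
  qed
  have "g k = (\<lambda>w. r w + pk w)" by (simp add: r_def)
  then have e'_k: "inner_on U e' (g k) = 0"
    using e'_r inner_on_family_span_right[OF e'_I pk] by (simp add: inner_on_add_right)
  have "(\<lambda>w. p w + \<alpha> * r w) \<in> family_span (insert k I) g"
    using p span_mono r_span by (intro family_span_add family_span_scale) auto
  moreover have "(\<lambda>w. x w - (p w + \<alpha> * r w)) = e'" by (simp add: e'_def e_def algebra_simps)
  ultimately show ?case using e'_I e'_k by (intro bexI) auto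
qed

lemma orth_proj_family_span:
  assumes U: "finite U" and I: "finite I" and supp: "\<forall>i\<in>I. \<forall>w. w \<notin> U \<longrightarrow> g i w = 0"
  defines "S \<equiv> family_span I g"
  shows "orth_proj U S x \<in> S \<and> (\<forall>y\<in>S. inner_on U (\<lambda>w. x w - orth_proj U S x w) y = 0)"
proof -
  have exists: "\<exists>p. p \<in> S \<and> (\<forall>y\<in>S. inner_on U (\<lambda>w. x w - p w) y = 0)"
    using orthogonal_residual_exists[OF U I, of g x] inner_on_family_span_right
    unfolding S_def by blast
  have unique: "p1 = p2"
    if p1: "p1 \<in> S" "\<forall>y\<in>S. inner_on U (\<lambda>w. x w - p1 w) y = 0"
      and p2: "p2 \<in> S" "\<forall>y\<in>S. inner_on U (\<lambda>w. x w - p2 w) y = 0" for p1 p2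
  proof
    fix w
    define d where "d = (\<lambda>w. p1 w - p2 w)"
    have d_S: "d \<in> S" using p1(1) p2(1) unfolding d_def S_def by (rule family_span_diff)
    have "d = (\<lambda>w. (x w - p2 w) - (x w - p1 w))" by (simp add: d_def)
    then have "inner_on U d d = inner_on U (\<lambda>w. x w - p2 w) d - inner_on U (\<lambda>w. x w - p1 w) d"
      by (simp only: inner_on_diff_left)
    then have "inner_on U d d = 0" using p1(2) p2(2) d_S by simp
    then have "w \<in> U \<Longrightarrow> d w = 0" using inner_on_self_eq_0D[OF U] by blast
    moreover have "w \<notin> U \<Longrightarrow> d w = 0"
      using d_S supp unfolding S_def by (intro family_span_vanishes[of I g]) auto
    ultimately show "p1 w = p2 w" by (cases "w \<in> U") (auto simp: d_def)
  qed
  from exists unique have "\<exists>!p. p \<in> S \<and> (\<forall>y\<in>S. inner_on U (\<lambda>w. x w - p w) y = 0)"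
    by blast
  then show ?thesis unfolding orth_proj_def by (rule theI')
qed

lemma inner_on_orth_proj_family_span:
  assumes "finite U" "finite I" "\<forall>i\<in>I. \<forall>w. w \<notin> U \<longrightarrow> g i w = 0" "y \<in> family_span I g"
  shows "inner_on U (orth_proj U (family_span I g) x) y = inner_on U x y"
  using orth_proj_family_span[OF assms(1-3), of x] assms(4) by (simp add: inner_on_diff_left)

lemma hist_obs_prob_snoc: "hist_obs_prob obs (\<sigma> @ [x]) = hist_obs_prob obs \<sigma> * obs \<sigma> (fst x)"
  unfolding hist_obs_prob_def by (simp add: nth_append)

lemma hist_obs_prob_nonneg:
  assumes "valid_process H obs" "length \<sigma> \<le> H"
  shows "hist_obs_prob obs \<sigma> \<ge> 0"
  using assms unfolding hist_obs_prob_def valid_process_def by (intro prod_nonneg) auto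

lemma hist_obs_prob_mult_test_prob:
  assumes "valid_process H obs" "length \<sigma> \<le> H"
  shows "hist_obs_prob obs \<sigma> * test_prob obs \<sigma> t
       = hist_obs_prob obs \<sigma> * (\<Prod>i<length (fst t). obs (\<sigma> @ zip (take i (fst t)) (take i (snd t))) (fst t ! i))"
  using hist_obs_prob_nonneg[OF assms] by (auto simp: test_prob_def reachable_def)

lemma hist_obs_prob_mult_test_prob_ext_test:
  assumes "valid_process H obs" "length \<sigma> < H"
  shows "hist_obs_prob obs \<sigma> * test_prob obs \<sigma> (ext_test ob a u)
       = hist_obs_prob obs (\<sigma> @ [(ob, a)]) * test_prob obs (\<sigma> @ [(ob, a)]) u"
proof -
  define rest where "rest = (\<Prod>i<length (fst u).
      obs ((\<sigma> @ [(ob, a)]) @ zip (take i (fst u)) (take i (snd u))) (fst u ! i))"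
  have "hist_obs_prob obs \<sigma> * test_prob obs \<sigma> (ext_test ob a u)
      = hist_obs_prob obs \<sigma> * (\<Prod>i<Suc (length (fst u)).
          obs (\<sigma> @ zip (take i (ob # fst u)) (take i (a # snd u))) ((ob # fst u) ! i))"
    using hist_obs_prob_mult_test_prob[OF assms(1), of \<sigma> "ext_test ob a u"] assms(2)
    by (simp add: ext_test_def del: prod.lessThan_Suc)
  also have "\<dots> = hist_obs_prob obs \<sigma> * (obs \<sigma> ob * rest)"
    by (simp add: rest_def prod.lessThan_Suc_shift del: prod.lessThan_Suc)
  also have "\<dots> = hist_obs_prob obs (\<sigma> @ [(ob, a)]) * rest"
    by (simp add: hist_obs_prob_snoc)
  also have "\<dots> = hist_obs_prob obs (\<sigma> @ [(ob, a)]) * test_prob obs (\<sigma> @ [(ob, a)]) u"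
    using assms(2) by (subst hist_obs_prob_mult_test_prob[OF assms(1)]) (simp_all add: rest_def)
  finally show ?thesis .
qed

lemma finite_hists_of_length: "finite {\<tau> :: ('ob::finite, 'a::finite) hist. length \<tau> = h}"
  using finite_lists_length_eq[of "UNIV :: ('ob \<times> 'a) set" h] by simp

lemma core_colspace_0: "core_colspace U obs 0 = family_span {()} (\<lambda>_. q0 U obs)"
  unfolding core_colspace_def family_span_def by auto

lemma core_colspace_Suc:
  "core_colspace U obs (Suc h) = family_span {\<tau>. length \<tau> = Suc h} (pred_state U obs)"
  unfolding core_colspace_def family_span_def by simp

lemma inner_on_orth_proj_core_colspace:
  assumes "finite (U (Suc h))" "v \<in> core_colspace U obs h"
  shows "inner_on (U (Suc h)) (orth_proj (U (Suc h)) (core_colspace U obs h) x) v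
       = inner_on (U (Suc h)) x v"
proof (cases h)
  case 0
  then show ?thesis using assms
    by (simp add: core_colspace_0 inner_on_orth_proj_family_span q0_def pred_state_def)
next
  case (Suc h')
  then show ?thesis using assms finite_hists_of_length
    by (simp add: core_colspace_Suc, intro inner_on_orth_proj_family_span) (auto simp: pred_state_def)
qed

definition joint_pred_state :: "(nat \<Rightarrow> ('ob,'a) test set) \<Rightarrow> (('ob,'a) hist \<Rightarrow> 'ob \<Rightarrow> real)
    \<Rightarrow> ('ob,'a) hist \<Rightarrow> ('ob,'a) test \<Rightarrow> real" where
  "joint_pred_state U obs \<sigma> = (\<lambda>u. hist_obs_prob obs \<sigma> * pred_state U obs \<sigma> u)"

lemma joint_pred_state_in_core_colspace:
  "joint_pred_state U obs (\<sigma> :: ('ob::finite, 'a::finite) hist) \<in> core_colspace U obs (length \<sigma>)"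
proof (cases "length \<sigma>")
  case 0
  then have "joint_pred_state U obs \<sigma> = (\<lambda>u. 1 * q0 U obs u)"
    by (simp add: joint_pred_state_def hist_obs_prob_def q0_def)
  then show ?thesis using 0 family_span_member[of "{()}" "()"]
    by (simp add: core_colspace_0 family_span_scale)
next
  case (Suc h)
  then have "pred_state U obs \<sigma> \<in> family_span {\<tau>. length \<tau> = Suc h} (pred_state U obs)"
    by (intro family_span_member finite_hists_of_length) simp
  then show ?thesis using Suc by (simp add: core_colspace_Suc joint_pred_state_def family_span_scale)
qed

lemma is_PSRD:
  assumes "is_PSR H obs U m" "h \<in> {1..H}"
  shows "finite (U h)"
    and "u \<in> U h \<Longrightarrow> is_test H h u"
    and "is_test H h t \<Longrightarrow> length \<tau> = h - 1 \<Longrightarrow>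
         test_prob obs \<tau> t = (\<Sum>u\<in>U h. m t h u * test_prob obs \<tau> u)"
  using assms unfolding is_PSR_def by blast+

lemma is_test_ext_test: "is_test H (Suc h) u \<Longrightarrow> 1 \<le> h \<Longrightarrow> is_test H h (ext_test ob a u)"
  unfolding is_test_def ext_test_def by auto

lemma apply_M_joint_pred_state:
  assumes psr: "is_PSR H obs U m" and len: "length \<sigma> + 2 \<le> H"
  shows "apply_M U m ob a (Suc (length \<sigma>)) (joint_pred_state U obs \<sigma>)
       = joint_pred_state U obs (\<sigma> @ [(ob, a)])"
proof
  fix u
  define h where "h = Suc (length \<sigma>)"
  show "apply_M U m ob a h (joint_pred_state U obs \<sigma>) u = joint_pred_state U obs (\<sigma> @ [(ob, a)]) u"
  proof (cases "u \<in> U (Suc h)")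
    case False
    then show ?thesis by (simp add: h_def apply_M_def joint_pred_state_def pred_state_def)
  next
    case True
    have "is_test H (Suc h) u" using is_PSRD(2)[OF psr _ True] len by (simp add: h_def)
    then have test: "is_test H h (ext_test ob a u)" by (rule is_test_ext_test) (simp add: h_def)
    have "apply_M U m ob a h (joint_pred_state U obs \<sigma>) u
        = hist_obs_prob obs \<sigma> * (\<Sum>w\<in>U h. m (ext_test ob a u) h w * test_prob obs \<sigma> w)"
      using True by (simp add: h_def apply_M_def joint_pred_state_def pred_state_def
          sum_distrib_left mult_ac)
    also have "\<dots> = hist_obs_prob obs \<sigma> * test_prob obs \<sigma> (ext_test ob a u)"
      using is_PSRD(3)[OF psr _ test] len by (simp add: h_def)
    also have "\<dots> = hist_obs_prob obs (\<sigma> @ [(ob, a)]) * test_prob obs (\<sigma> @ [(ob, a)]) u"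
      using psr len by (intro hist_obs_prob_mult_test_prob_ext_test) (auto simp: is_PSR_def)
    also have "\<dots> = joint_pred_state U obs (\<sigma> @ [(ob, a)]) u"
      using True by (simp add: h_def joint_pred_state_def pred_state_def)
    finally show ?thesis .
  qed
qed

lemma apply_M_orth_proj_core_colspace:
  assumes "finite (U (Suc h))" "v \<in> core_colspace U obs h"
    and "\<forall>u\<in>U (h + 2). m' (ext_test ob a u) (Suc h)
           = orth_proj (U (Suc h)) (core_colspace U obs h) (m (ext_test ob a u) (Suc h))"
  shows "apply_M U m' ob a (Suc h) v = apply_M U m ob a (Suc h) v"
  using inner_on_orth_proj_core_colspace[OF assms(1,2)] assms(3)
  by (auto simp: apply_M_def inner_on_def)

lemma prop_state_orth_proj_eq_joint_pred_state:
  assumes psr: "is_PSR H obs U m"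
    and m'_def: "\<forall>ob a h u. h \<in> {1..H-1} \<longrightarrow> u \<in> U (h+1) \<longrightarrow>
        m' (ext_test ob a u) h = orth_proj (U h) (core_colspace U obs (h-1)) (m (ext_test ob a u) h)"
    and "l < H" "l \<le> length \<tau>"
  shows "prop_state U m' (q0 U obs) \<tau> l = joint_pred_state U obs (take l \<tau>)"
  using assms(3,4)
proof (induction l)
  case 0
  show ?case by (simp add: joint_pred_state_def hist_obs_prob_def q0_def)
next
  case (Suc l)
  define \<sigma> where "\<sigma> = take l \<tau>"
  define ob where "ob = fst (\<tau> ! l)"
  define a where "a = snd (\<tau> ! l)"
  have len_\<sigma>: "length \<sigma> = l" using Suc.prems by (simp add: \<sigma>_def)
  have "prop_state U m' (q0 U obs) \<tau> (Suc l) = apply_M U m' ob a (Suc l) (joint_pred_state U obs \<sigma>)"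
    using Suc by (simp add: ob_def a_def \<sigma>_def)
  also have "\<dots> = apply_M U m ob a (Suc l) (joint_pred_state U obs \<sigma>)"
  proof (rule apply_M_orth_proj_core_colspace)
    show "finite (U (Suc l))" using is_PSRD(1)[OF psr] Suc.prems by simp
    show "joint_pred_state U obs \<sigma> \<in> core_colspace U obs l"
      using joint_pred_state_in_core_colspace len_\<sigma> by metis
    show "\<forall>u\<in>U (l + 2). m' (ext_test ob a u) (Suc l)
        = orth_proj (U (Suc l)) (core_colspace U obs l) (m (ext_test ob a u) (Suc l))"
      using m'_def[rule_format, where h = "Suc l"] Suc.prems by simp
  qed
  also have "\<dots> = joint_pred_state U obs (\<sigma> @ [(ob, a)])"
    using apply_M_joint_pred_state[OF psr, of \<sigma>] Suc.prems len_\<sigma> by simp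
  also have "\<sigma> @ [(ob, a)] = take (Suc l) \<tau>"
    using Suc.prems by (simp add: \<sigma>_def ob_def a_def take_Suc_conv_app_nth)
  finally show ?case .
qed

lemma joint_pred_state_single_obs:
  assumes "valid_process H obs" "length \<sigma> < H" "([ob], []) \<in> U (Suc (length \<sigma>))"
  shows "joint_pred_state U obs \<sigma> ([ob], []) = hist_obs_prob obs (\<sigma> @ [(ob, a)])"
  using assms
  by (simp add: joint_pred_state_def pred_state_def hist_obs_prob_mult_test_prob hist_obs_prob_snoc)

lemma traj_prob_eq_hist_obs_prob_mult_policy_prob:
  "traj_prob obs \<pi> \<tau> = hist_obs_prob obs \<tau> * policy_prob \<pi> \<tau>"
  unfolding traj_prob_def hist_obs_prob_def policy_prob_def by (simp add: prod.distrib)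

theorem lemma6:
  fixes H :: nat
    and obs :: "('ob::finite,'a::finite) hist \<Rightarrow> 'ob \<Rightarrow> real"
    and U :: "nat \<Rightarrow> ('ob,'a) test set"
    and m :: "('ob,'a) test \<Rightarrow> nat \<Rightarrow> ('ob,'a) test \<Rightarrow> real"
    and \<pi> :: "('ob,'a) hist \<Rightarrow> 'ob \<Rightarrow> 'a \<Rightarrow> real"
    and \<tau> :: "('ob,'a) hist"
  assumes H: "H \<ge> 1"
    and psr: "is_PSR H obs U m"
    and obsU: "\<forall>ob. ([ob], []) \<in> U H"
    and mH: "\<forall>ob. m ([ob], []) H = (\<lambda>w. if w = ([ob], []) then 1 else 0)"
    and m'_def: "\<forall>ob a h u. h \<in> {1..H-1} \<longrightarrow> u \<in> U (h+1) \<longrightarrow>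
        m' (ext_test ob a u) h = orth_proj (U h) (core_colspace U obs (h-1)) (m (ext_test ob a u) h)"
    and pol: "valid_policy H \<pi>"
    and len: "length \<tau> = H"
  shows "traj_prob obs \<pi> \<tau> = param_traj_prob H U m' (q0 U obs) \<pi> \<tau>"
proof -
  define \<sigma> where "\<sigma> = take (H - 1) \<tau>"
  define ob where "ob = fst (\<tau> ! (H - 1))"
  define a where "a = snd (\<tau> ! (H - 1))"
  have len_\<sigma>: "length \<sigma> = H - 1" using len by (simp add: \<sigma>_def)
  have \<tau>_eq: "\<tau> = \<sigma> @ [(ob, a)]"
    using H len take_Suc_conv_app_nth[of "H - 1" \<tau>] by (simp add: \<sigma>_def ob_def a_def)
  have "param_traj_prob H U m' (q0 U obs) \<pi> \<tau> = joint_pred_state U obs \<sigma> ([ob], []) * policy_prob \<pi> \<tau>"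
    using prop_state_orth_proj_eq_joint_pred_state[OF psr m'_def, of "H - 1" \<tau>] H len
    by (simp add: param_traj_prob_def \<sigma>_def ob_def)
  also have "\<dots> = hist_obs_prob obs \<tau> * policy_prob \<pi> \<tau>"
    using joint_pred_state_single_obs[of H obs \<sigma> ob U a] psr obsU H len_\<sigma> \<tau>_eq
    by (simp add: is_PSR_def)
  finally show ?thesis by (simp add: traj_prob_eq_hist_obs_prob_mult_policy_prob)
qed

end
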